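(* For every $0<a<2$, as $\theta\to\infty$, \[f'''(\theta)=O\big(e^{-a\theta}\big)\qquad\text{and}\qquad j''(\theta)=O\big(e^{-a\theta}\big).\]
   Context: Define $\lambda:[0,\infty)\to(0,1/4]$ by $\lambda(0)=1/4$ and, for $\theta>0$, $\lambda(\theta)$ is the unique $\lambda\in(0,1/4)$ with $-1+\frac{\operatorname{artanh}(\sqrt{1-4\lambda})}{\sqrt{1-4\lambda}}=\theta$. For $\theta>0$ set $f(\theta)=-\ln\lambda(\theta)-2\theta-\theta\ln\big(1-4\lambda(\theta)\big)$ and $j(\theta)=-\tfrac12\ln\big(1-4(\theta+1)\lambda(\theta)\big)+\tfrac12\ln 2$. *)

theory Defs
  imports "HOL-Analysis.Analysis" "HOL-Library.Landau_Symbols"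
begin

text \<open>lambda(theta): lambda(0) = 1/4; for theta > 0 the unique l in (0,1/4) with
  -1 + artanh(sqrt(1-4l))/sqrt(1-4l) = theta.  Only values on [0,inf) matter.\<close>
definition lam :: "real \<Rightarrow> real" where
  "lam \<theta> = (if \<theta> \<le> 0 then 1/4 else
     (THE l. 0 < l \<and> l < 1/4 \<and>
        -1 + artanh (sqrt (1 - 4*l)) / sqrt (1 - 4*l) = \<theta>))"

definition f_fun :: "real \<Rightarrow> real" where
  "f_fun \<theta> = - ln (lam \<theta>) - 2*\<theta> - \<theta> * ln (1 - 4 * lam \<theta>)"

definition j_fun :: "real \<Rightarrow> real" where
  "j_fun \<theta> = - (1/2) * ln (1 - 4*(\<theta>+1) * lam \<theta>) + (1/2) * ln 2"

end

theory Submission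
  imports Defs "HOL-Real_Asymp.Real_Asymp"
begin

text \<open>
  With \<open>s = sqrt (1 - 4 \<lambda>)\<close> the equation defining \<open>\<lambda>(\<theta>)\<close> reads \<open>\<theta> = artanh s / s - 1\<close>,
  whose right-hand side is increasing in \<open>s\<close> because \<open>artanh s < s / (1 - s\<^sup>2)\<close>. Hence \<open>s\<close>,
  \<open>u = 1 - s\<^sup>2 = 4 \<lambda>\<close> and \<open>q = 1 - (1 + \<theta>) u = 1 - 4 (\<theta> + 1) \<lambda>\<close> are differentiable in \<open>\<theta>\<close>,
  with \<open>s' = s u / q\<close>, and the derivatives of \<open>f\<close> and \<open>j\<close> are rational functions of \<open>\<theta>\<close>, \<open>u\<close>, \<open>q\<close>.
  Since \<open>artanh s = s (1 + \<theta>)\<close>, we have \<open>u \<le> 4 exp (-2 s (1 + \<theta>))\<close>, and a bootstrap turns this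
  into \<open>u = O(exp (-2 \<theta>))\<close>. Then \<open>(1 + \<theta>) u \<rightarrow> 0\<close> and \<open>q \<rightarrow> 1\<close>, so the third derivative of \<open>f\<close>
  is \<open>O(u)\<close> and the second derivative of \<open>j\<close> is \<open>O((1 + \<theta>) u)\<close>, both \<open>O(exp (-a \<theta>))\<close> for \<open>a < 2\<close>.
\<close>

lemma artanh_less_div:
  fixes s :: real
  assumes "0 < s" "s < 1"
  shows "artanh s < s / (1 - s^2)"
proof -
  define h where "h x = x / (1 - x^2) - artanh x" for x :: real
  have h_deriv: "(h has_real_derivative 2 * x^2 / (1 - x^2)^2) (at x)" if "0 \<le> x" "x < 1" for x
  proof -
    have "x^2 < 1" using that by (simp add: abs_square_less_1)
    then have ne: "1 - x^2 \<noteq> 0" by simp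
    have "(h has_real_derivative ((1 - x^2) + 2*x*x) / (1 - x^2)^2 - 1 / (1 - x^2)) (at x)"
      unfolding h_def[abs_def]
      by (rule derivative_eq_intros refl | use that ne in force)+ (simp add: power2_eq_square)
    moreover have "((1 - x^2) + 2*x*x) / (1 - x^2)^2 - 1 / (1 - x^2) = 2 * x^2 / (1 - x^2)^2"
      using ne by (simp add: field_simps) algebra
    ultimately show ?thesis by simp
  qed
  have "h 0 < h s"
  proof (rule DERIV_pos_imp_increasing_open[of 0 s h])
    show "continuous_on {0..s} h"
      using h_deriv assms by (intro DERIV_atLeastAtMost_imp_continuous_on) force
    show "\<exists>y. (h has_real_derivative y) (at x) \<and> 0 < y" if "0 < x" "x < s" for x
    proof -
      have "x^2 < 1" using that assms by (simp add: abs_square_less_1)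
      then show ?thesis
        using h_deriv[of x] that assms by (intro exI[of _ "2 * x^2 / (1 - x^2)^2"]) simp
    qed
  qed (fact assms)
  then show ?thesis by (simp add: h_def)
qed

lemma one_minus_sq_le_exp_artanh:
  fixes s :: real
  assumes "\<bar>s\<bar> < 1"
  shows "1 - s^2 \<le> 4 * exp (-2 * artanh s)"
proof -
  have pos: "0 < 1 + s" "0 < 1 - s" using assms by auto
  then have "-2 * artanh s = ln ((1 - s) / (1 + s))" by (simp add: artanh_def ln_div)
  then have exp_eq: "exp (-2 * artanh s) = (1 - s) / (1 + s)" using pos by simp
  have "1 - s^2 = (1 + s)^2 * ((1 - s) / (1 + s))"
    using pos by (simp add: field_simps power2_eq_square)
  also have "\<dots> \<le> 2^2 * ((1 - s) / (1 + s))"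
    using pos by (intro mult_right_mono power_mono) auto
  also have "\<dots> = 4 * exp (-2 * artanh s)" unfolding exp_eq by simp
  finally show ?thesis .
qed

lemma tendsto_zero_if_bigo_smallo_one:
  fixes f g :: "'a \<Rightarrow> real"
  assumes "f \<in> O[F](g)" and "g \<in> o[F](\<lambda>_. 1)"
  shows "(f \<longlongrightarrow> 0) F"
  using smalloD_tendsto[OF landau_o.big_small_trans[OF assms]] by simp

lemma bigo_of_eventually_mult_tendsto:
  fixes f g h :: "'a \<Rightarrow> 'b :: real_normed_field"
  assumes "eventually (\<lambda>x. f x = g x * h x) F" and "(h \<longlongrightarrow> c) F"
  shows "f \<in> O[F](g)"
proof -
  have "h \<in> O[F](\<lambda>_. 1)" using assms(2) by (intro bigoI_tendsto[where c = c]) auto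
  then have "(\<lambda>x. g x * h x) \<in> O[F](\<lambda>x. g x * 1)" by (rule landau_o.big.mult_left)
  then show ?thesis using assms(1) by (simp add: landau_o.big.in_cong)
qed

lemma higher_deriv_eq_on_open:
  fixes f :: "'a :: real_normed_field \<Rightarrow> 'a" and F :: "nat \<Rightarrow> 'a \<Rightarrow> 'a"
  assumes "open U" and "\<And>x. x \<in> U \<Longrightarrow> f x = F 0 x"
    and "\<And>k x. k < n \<Longrightarrow> x \<in> U \<Longrightarrow> (F k has_field_derivative F (Suc k) x) (at x)"
    and "x \<in> U"
  shows "(deriv ^^ n) f x = F n x"
  using assms(3,4)
proof (induction n arbitrary: x)
  case 0
  then show ?case using assms(2) by simp
next
  case (Suc n)
  have "eventually (\<lambda>y. y \<in> U) (nhds x)"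
    using assms(1) Suc.prems(2) by (rule eventually_nhds_in_open)
  then have "eventually (\<lambda>y. (deriv ^^ n) f y = F n y) (nhds x)"
    by eventually_elim (use Suc in auto)
  then have "deriv ((deriv ^^ n) f) x = deriv (F n) x" by (rule deriv_cong_ev) simp
  also have "\<dots> = F (Suc n) x" using Suc.prems by (intro DERIV_imp_deriv) auto
  finally show ?case by simp
qed

definition theta_at :: "real \<Rightarrow> real" where
  "theta_at s = artanh s / s - 1"

lemma theta_at_deriv:
  assumes "0 < s" "s < 1"
  shows "(theta_at has_real_derivative (s / (1 - s^2) - artanh s) / s^2) (at s)"
proof -
  have "s^2 < 1" using assms by (simp add: abs_square_less_1)
  then show ?thesis
    unfolding theta_at_def[abs_def] using assms
    by (auto intro!: derivative_eq_intros simp: power2_eq_square)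
qed

lemma theta_at_deriv_pos:
  fixes s :: real
  assumes "0 < s" "s < 1"
  shows "0 < (s / (1 - s^2) - artanh s) / s^2"
  using artanh_less_div[OF assms] assms by simp

lemma isCont_theta_at: "0 < s \<Longrightarrow> s < 1 \<Longrightarrow> isCont theta_at s"
  using theta_at_deriv by (rule DERIV_isCont)

lemma strict_mono_on_theta_at: "strict_mono_on {0<..<1} theta_at"
proof (rule strict_mono_onI)
  fix x y :: real
  assume "x \<in> {0<..<1}" "y \<in> {0<..<1}" "x < y"
  show "theta_at x < theta_at y"
  proof (rule DERIV_pos_imp_increasing[OF \<open>x < y\<close>])
    fix z assume "x \<le> z" "z \<le> y"
    then have "0 < z" "z < 1" using \<open>x \<in> {0<..<1}\<close> \<open>y \<in> {0<..<1}\<close> by auto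
    then show "\<exists>D. (theta_at has_real_derivative D) (at z) \<and> 0 < D"
      using theta_at_deriv[of z] theta_at_deriv_pos[of z] by blast
  qed
qed

definition theta0 :: real where
  "theta0 = theta_at (1/2)"

lemma theta0_pos: "0 < theta0"
proof -
  have "artanh (1/2 :: real) = ln 3 / 2" by (simp add: artanh_def)
  then show ?thesis using ln3_gt_1 by (simp add: theta0_def theta_at_def)
qed

lemma theta_at_surj:
  assumes "theta0 < \<theta>"
  obtains s where "1/2 < s" "s < 1" "theta_at s = \<theta>"
proof -
  define b where "b = tanh (\<theta> + 1)"
  have "0 < \<theta>" using assms theta0_pos by linarith
  then have b: "0 < b" "b < 1" by (auto simp: b_def tanh_real_lt_1)
  have "\<theta> + 1 < (\<theta> + 1) / b" using b \<open>0 < \<theta>\<close> by (simp add: less_divide_eq)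
  then have "\<theta> < theta_at b" by (simp add: theta_at_def b_def artanh_tanh_real)
  moreover have "theta_at (1/2) < \<theta>" using assms by (simp add: theta0_def)
  ultimately have "1/2 < b"
    using strict_mono_on_less[OF strict_mono_on_theta_at, of "1/2" b] b by auto
  have "continuous_on {1/2..b} theta_at"
    using b by (intro continuous_at_imp_continuous_on ballI isCont_theta_at) auto
  then obtain s where s: "1/2 \<le> s" "s \<le> b" "theta_at s = \<theta>"
    using IVT'[of theta_at "1/2" \<theta> b] \<open>theta_at (1/2) < \<theta>\<close> \<open>\<theta> < theta_at b\<close> \<open>1/2 < b\<close>
    by auto
  moreover have "s \<noteq> 1/2" using s(3) \<open>theta_at (1/2) < \<theta>\<close> by force
  ultimately show ?thesis using b by (intro that) auto
qed

definition s_fun :: "real \<Rightarrow> real" where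
  "s_fun \<theta> = sqrt (1 - 4 * lam \<theta>)"

lemma s_fun_spec:
  assumes "theta0 < \<theta>"
  shows "1/2 < s_fun \<theta>" "s_fun \<theta> < 1" "theta_at (s_fun \<theta>) = \<theta>"
    and "lam \<theta> = (1 - s_fun \<theta>^2) / 4"
proof -
  obtain s where s: "1/2 < s" "s < 1" "theta_at s = \<theta>" using theta_at_surj[OF assms] .
  have "0 < \<theta>" using assms theta0_pos by linarith
  have solution_iff: "(0 < l \<and> l < 1/4 \<and> -1 + artanh (sqrt (1 - 4*l)) / sqrt (1 - 4*l) = \<theta>)
      \<longleftrightarrow> l = (1 - s^2) / 4" for l
  proof
    assume l: "0 < l \<and> l < 1/4 \<and> -1 + artanh (sqrt (1 - 4*l)) / sqrt (1 - 4*l) = \<theta>"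
    then have "s = sqrt (1 - 4*l)"
      using strict_mono_on_eqD[OF strict_mono_on_theta_at, of "sqrt (1 - 4*l)" s] s
      by (auto simp: theta_at_def real_sqrt_lt_1_iff)
    then show "l = (1 - s^2) / 4" using l by simp
  next
    assume l: "l = (1 - s^2) / 4"
    then have "1 - 4*l = s^2" by simp
    then have "sqrt (1 - 4*l) = s" using s by simp
    moreover have "s^2 < 1" using s by (simp add: abs_square_less_1)
    moreover have "(1/2)^2 < s^2" using s by (intro power_strict_mono) auto
    ultimately show "0 < l \<and> l < 1/4 \<and> -1 + artanh (sqrt (1 - 4*l)) / sqrt (1 - 4*l) = \<theta>"
      using s unfolding l by (simp add: theta_at_def)
  qed
  have lam: "lam \<theta> = (1 - s^2) / 4"
    unfolding lam_def solution_iff the_eq_trivial using \<open>0 < \<theta>\<close> by simp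
  then have "1 - 4 * lam \<theta> = s^2" by simp
  then have "s_fun \<theta> = s" using s by (simp add: s_fun_def)
  with lam s show "1/2 < s_fun \<theta>" "s_fun \<theta> < 1" "theta_at (s_fun \<theta>) = \<theta>"
    "lam \<theta> = (1 - s_fun \<theta>^2) / 4"
    by simp_all
qed

lemma s_fun_theta_at:
  assumes "1/2 < s" "s < 1"
  shows "s_fun (theta_at s) = s"
proof -
  have "theta0 < theta_at s"
    using strict_mono_on_less[OF strict_mono_on_theta_at, of "1/2" s] assms
    by (simp add: theta0_def)
  then show ?thesis
    using strict_mono_on_eqD[OF strict_mono_on_theta_at, of "s_fun (theta_at s)" s]
      s_fun_spec[of "theta_at s"] assms
    by auto
qed

definition u_fun :: "real \<Rightarrow> real" where
  "u_fun \<theta> = 1 - s_fun \<theta> ^ 2"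

definition q_fun :: "real \<Rightarrow> real" where
  "q_fun \<theta> = 1 - (1 + \<theta>) * u_fun \<theta>"

definition w_fun :: "real \<Rightarrow> real" where
  "w_fun \<theta> = 2 * \<theta> + 1 - (1 + \<theta>) * u_fun \<theta>"

lemma lam_eq_u_fun: "theta0 < \<theta> \<Longrightarrow> lam \<theta> = u_fun \<theta> / 4"
  by (simp add: s_fun_spec u_fun_def)

lemma u_fun_bounds:
  assumes "theta0 < \<theta>"
  shows "0 < u_fun \<theta>" "u_fun \<theta> < 1"
proof -
  have "1/2 < s_fun \<theta>" "s_fun \<theta> < 1" using s_fun_spec[OF assms] by simp_all
  then have "0 < s_fun \<theta> ^ 2" "s_fun \<theta> ^ 2 < 1" by (simp_all add: abs_square_less_1)
  then show "0 < u_fun \<theta>" "u_fun \<theta> < 1" by (simp_all add: u_fun_def)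
qed

lemma theta_at_deriv_at_s_fun:
  assumes "theta0 < \<theta>"
  shows "(theta_at has_real_derivative q_fun \<theta> / (s_fun \<theta> * u_fun \<theta>)) (at (s_fun \<theta>))"
    and "0 < q_fun \<theta> / (s_fun \<theta> * u_fun \<theta>)"
proof -
  define s where "s = s_fun \<theta>"
  have s: "1/2 < s" "s < 1" "theta_at s = \<theta>" using s_fun_spec[OF assms] by (simp_all add: s_def)
  have "artanh s = s * (1 + \<theta>)" using s by (simp add: theta_at_def field_simps)
  moreover have "1 - s^2 = u_fun \<theta>" by (simp add: u_fun_def s_def)
  ultimately have "(s / (1 - s^2) - artanh s) / s^2 = (s / u_fun \<theta> - s * (1 + \<theta>)) / s^2" by simp
  also have "\<dots> = q_fun \<theta> / (s * u_fun \<theta>)"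
    using s u_fun_bounds[OF assms] by (simp add: q_fun_def field_simps power2_eq_square)
  finally show "(theta_at has_real_derivative q_fun \<theta> / (s_fun \<theta> * u_fun \<theta>)) (at (s_fun \<theta>))"
    and "0 < q_fun \<theta> / (s_fun \<theta> * u_fun \<theta>)"
    using theta_at_deriv[of s] theta_at_deriv_pos[of s] s by (simp_all add: s_def)
qed

lemma q_fun_pos:
  assumes "theta0 < \<theta>"
  shows "0 < q_fun \<theta>"
proof -
  have "0 < s_fun \<theta> * u_fun \<theta>" using s_fun_spec[OF assms] u_fun_bounds[OF assms] by simp
  then show ?thesis using theta_at_deriv_at_s_fun(2)[OF assms] by (simp add: zero_less_divide_iff)
qed

lemma s_fun_deriv:
  assumes "theta0 < \<theta>"
  shows "(s_fun has_real_derivative s_fun \<theta> * u_fun \<theta> / q_fun \<theta>) (at \<theta>)"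
proof -
  define s where "s = s_fun \<theta>"
  have s: "1/2 < s" "s < 1" "theta_at s = \<theta>" using s_fun_spec[OF assms] by (simp_all add: s_def)
  have "isCont s_fun (theta_at s)"
    by (rule isCont_inverse_function2[where a = "(1/2 + s) / 2" and b = "(s + 1) / 2"])
       (use s in \<open>auto intro!: s_fun_theta_at isCont_theta_at\<close>)
  then have "isCont s_fun \<theta>" using s by simp
  have "(s_fun has_real_derivative inverse (q_fun \<theta> / (s * u_fun \<theta>))) (at \<theta>)"
  proof (rule DERIV_inverse_function[where f = theta_at and a = theta0 and b = "\<theta> + 1"])
    show "(theta_at has_real_derivative q_fun \<theta> / (s * u_fun \<theta>)) (at (s_fun \<theta>))"
      using theta_at_deriv_at_s_fun(1)[OF assms] by (simp add: s_def)
    show "q_fun \<theta> / (s * u_fun \<theta>) \<noteq> 0"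
      using q_fun_pos[OF assms] u_fun_bounds[OF assms] s by simp
  qed (use assms s_fun_spec \<open>isCont s_fun \<theta>\<close> in auto)
  then show ?thesis by (simp add: s_def)
qed

lemma u_fun_deriv:
  assumes "theta0 < \<theta>"
  shows "(u_fun has_real_derivative -2 * (1 - u_fun \<theta>) * u_fun \<theta> / q_fun \<theta>) (at \<theta>)"
proof -
  have u_fun_eq: "(\<lambda>x. 1 - s_fun x ^ 2) = u_fun" by (simp add: fun_eq_iff u_fun_def)
  have "((\<lambda>x. 1 - s_fun x ^ 2) has_real_derivative -2 * (1 - u_fun \<theta>) * u_fun \<theta> / q_fun \<theta>) (at \<theta>)"
    by (auto intro!: derivative_eq_intros s_fun_deriv[OF assms] simp: u_fun_def power2_eq_square)
  then show ?thesis by (simp only: u_fun_eq)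
qed

lemma q_fun_deriv:
  assumes "theta0 < \<theta>"
  shows "(q_fun has_real_derivative u_fun \<theta> * w_fun \<theta> / q_fun \<theta>) (at \<theta>)"
proof -
  have q_fun_eq: "(\<lambda>x. 1 - (1 + x) * u_fun x) = q_fun" by (simp add: fun_eq_iff q_fun_def)
  have "q_fun \<theta> \<noteq> 0" using q_fun_pos[OF assms] by simp
  then have "((\<lambda>x. 1 - (1 + x) * u_fun x) has_real_derivative u_fun \<theta> * w_fun \<theta> / q_fun \<theta>) (at \<theta>)"
    by (auto intro!: derivative_eq_intros u_fun_deriv[OF assms] simp: field_simps)
       (simp add: q_fun_def w_fun_def algebra_simps)
  then show ?thesis by (simp only: q_fun_eq)
qed

lemma w_fun_deriv:
  assumes "theta0 < \<theta>"
  shows "(w_fun has_real_derivative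
          2 - u_fun \<theta> + 2 * (1 + \<theta>) * (1 - u_fun \<theta>) * u_fun \<theta> / q_fun \<theta>) (at \<theta>)"
proof -
  have w_fun_eq: "(\<lambda>x. 2 * x + 1 - (1 + x) * u_fun x) = w_fun" by (simp add: fun_eq_iff w_fun_def)
  have "((\<lambda>x. 2 * x + 1 - (1 + x) * u_fun x) has_real_derivative
      2 - u_fun \<theta> + 2 * (1 + \<theta>) * (1 - u_fun \<theta>) * u_fun \<theta> / q_fun \<theta>) (at \<theta>)"
    using q_fun_pos[OF assms]
    by (auto intro!: derivative_eq_intros u_fun_deriv[OF assms] simp: field_simps)
  then show ?thesis by (simp only: w_fun_eq)
qed

lemma f_fun_derivs:
  assumes "theta0 < \<theta>"
  shows "((\<lambda>x. - ln (u_fun x / 4) - 2 * x - x * ln (1 - u_fun x)) has_real_derivative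
          - ln (1 - u_fun \<theta>)) (at \<theta>)"
    and "((\<lambda>x. - ln (1 - u_fun x)) has_real_derivative -2 * u_fun \<theta> / q_fun \<theta>) (at \<theta>)"
    and "((\<lambda>x. -2 * u_fun x / q_fun x) has_real_derivative
          2 * u_fun \<theta> * (2 * (1 - u_fun \<theta>) * q_fun \<theta> + u_fun \<theta> * w_fun \<theta>) / q_fun \<theta> ^ 3) (at \<theta>)"
proof -
  have pos: "0 < u_fun \<theta>" "u_fun \<theta> < 1" "0 < q_fun \<theta>"
    using u_fun_bounds[OF assms] q_fun_pos[OF assms] by simp_all
  show "((\<lambda>x. - ln (u_fun x / 4) - 2 * x - x * ln (1 - u_fun x)) has_real_derivative
          - ln (1 - u_fun \<theta>)) (at \<theta>)"
    using pos by (auto intro!: derivative_eq_intros u_fun_deriv[OF assms] simp: field_simps)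
      (simp add: q_fun_def algebra_simps)
  show "((\<lambda>x. - ln (1 - u_fun x)) has_real_derivative -2 * u_fun \<theta> / q_fun \<theta>) (at \<theta>)"
    using pos by (auto intro!: derivative_eq_intros u_fun_deriv[OF assms] simp: field_simps)
  show "((\<lambda>x. -2 * u_fun x / q_fun x) has_real_derivative
          2 * u_fun \<theta> * (2 * (1 - u_fun \<theta>) * q_fun \<theta> + u_fun \<theta> * w_fun \<theta>) / q_fun \<theta> ^ 3) (at \<theta>)"
    using pos by (auto intro!: derivative_eq_intros u_fun_deriv[OF assms] q_fun_deriv[OF assms]
        simp: field_simps) algebra
qed

lemma j_fun_derivs:
  assumes "theta0 < \<theta>"
  shows "((\<lambda>x. - ln (q_fun x) / 2 + ln 2 / 2) has_real_derivative
          - u_fun \<theta> * w_fun \<theta> / (2 * q_fun \<theta> ^ 2)) (at \<theta>)"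
    and "((\<lambda>x. - u_fun x * w_fun x / (2 * q_fun x ^ 2)) has_real_derivative
          u_fun \<theta> * (2 * (1 - u_fun \<theta>) * w_fun \<theta> * q_fun \<theta> - (2 - u_fun \<theta>) * q_fun \<theta> ^ 2
            - 2 * (1 + \<theta>) * (1 - u_fun \<theta>) * u_fun \<theta> * q_fun \<theta> + 2 * u_fun \<theta> * w_fun \<theta> ^ 2)
          / (2 * q_fun \<theta> ^ 4)) (at \<theta>)"
proof -
  have pos: "0 < u_fun \<theta>" "u_fun \<theta> < 1" "0 < q_fun \<theta>"
    using u_fun_bounds[OF assms] q_fun_pos[OF assms] by simp_all
  show "((\<lambda>x. - ln (q_fun x) / 2 + ln 2 / 2) has_real_derivative
          - u_fun \<theta> * w_fun \<theta> / (2 * q_fun \<theta> ^ 2)) (at \<theta>)"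
    using pos
    by (auto intro!: derivative_eq_intros q_fun_deriv[OF assms] simp: field_simps power2_eq_square)
  show "((\<lambda>x. - u_fun x * w_fun x / (2 * q_fun x ^ 2)) has_real_derivative
          u_fun \<theta> * (2 * (1 - u_fun \<theta>) * w_fun \<theta> * q_fun \<theta> - (2 - u_fun \<theta>) * q_fun \<theta> ^ 2
            - 2 * (1 + \<theta>) * (1 - u_fun \<theta>) * u_fun \<theta> * q_fun \<theta> + 2 * u_fun \<theta> * w_fun \<theta> ^ 2)
          / (2 * q_fun \<theta> ^ 4)) (at \<theta>)"
    using pos by (auto intro!: derivative_eq_intros u_fun_deriv[OF assms] q_fun_deriv[OF assms]
        w_fun_deriv[OF assms] simp: field_simps) algebra
qed

lemma f_fun_third_deriv:
  assumes "theta0 < \<theta>"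
  shows "(deriv ^^ 3) f_fun \<theta>
    = 2 * u_fun \<theta> * (2 * (1 - u_fun \<theta>) * q_fun \<theta> + u_fun \<theta> * w_fun \<theta>) / q_fun \<theta> ^ 3"
proof -
  define F where "F = (!) [\<lambda>x. - ln (u_fun x / 4) - 2 * x - x * ln (1 - u_fun x),
    \<lambda>x. - ln (1 - u_fun x), \<lambda>x. -2 * u_fun x / q_fun x,
    \<lambda>x. 2 * u_fun x * (2 * (1 - u_fun x) * q_fun x + u_fun x * w_fun x) / q_fun x ^ 3]"
  have "(deriv ^^ 3) f_fun \<theta> = F 3 \<theta>"
  proof (rule higher_deriv_eq_on_open[of "{theta0<..}"])
    show "f_fun x = F 0 x" if "x \<in> {theta0<..}" for x
      using that by (simp add: F_def f_fun_def lam_eq_u_fun)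
    show "(F k has_field_derivative F (Suc k) x) (at x)" if "k < 3" "x \<in> {theta0<..}" for k x
      using that f_fun_derivs[of x] by (auto simp: F_def less_Suc_eq numeral_3_eq_3)
  qed (use assms in auto)
  then show ?thesis by (simp add: F_def numeral_3_eq_3)
qed

lemma j_fun_second_deriv:
  assumes "theta0 < \<theta>"
  shows "(deriv ^^ 2) j_fun \<theta>
    = u_fun \<theta> * (2 * (1 - u_fun \<theta>) * w_fun \<theta> * q_fun \<theta> - (2 - u_fun \<theta>) * q_fun \<theta> ^ 2
        - 2 * (1 + \<theta>) * (1 - u_fun \<theta>) * u_fun \<theta> * q_fun \<theta> + 2 * u_fun \<theta> * w_fun \<theta> ^ 2)
      / (2 * q_fun \<theta> ^ 4)"
proof -
  define F where "F = (!) [\<lambda>x. - ln (q_fun x) / 2 + ln 2 / 2,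
    \<lambda>x. - u_fun x * w_fun x / (2 * q_fun x ^ 2),
    \<lambda>x. u_fun x * (2 * (1 - u_fun x) * w_fun x * q_fun x - (2 - u_fun x) * q_fun x ^ 2
        - 2 * (1 + x) * (1 - u_fun x) * u_fun x * q_fun x + 2 * u_fun x * w_fun x ^ 2)
      / (2 * q_fun x ^ 4)]"
  have "(deriv ^^ 2) j_fun \<theta> = F 2 \<theta>"
  proof (rule higher_deriv_eq_on_open[of "{theta0<..}"])
    show "j_fun x = F 0 x" if "x \<in> {theta0<..}" for x
      using that by (simp add: F_def j_fun_def lam_eq_u_fun q_fun_def algebra_simps)
    show "(F k has_field_derivative F (Suc k) x) (at x)" if "k < 2" "x \<in> {theta0<..}" for k x
      using that j_fun_derivs[of x] by (auto simp: F_def less_Suc_eq numeral_2_eq_2)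
  qed (use assms in auto)
  then show ?thesis by (simp add: F_def numeral_2_eq_2)
qed

lemma u_fun_le:
  assumes "theta0 < \<theta>"
  shows "u_fun \<theta> \<le> 4 * exp 6 * exp (-2 * \<theta>)"
proof -
  define s where "s = s_fun \<theta>"
  have s: "1/2 < s" "s < 1" "theta_at s = \<theta>" using s_fun_spec[OF assms] by (simp_all add: s_def)
  have "0 < \<theta>" using assms theta0_pos by linarith
  have artanh_s: "artanh s = s * (1 + \<theta>)" using s by (simp add: theta_at_def field_simps)
  have u_le: "u_fun \<theta> \<le> 4 * exp (-2 * (s * (1 + \<theta>)))"
    using one_minus_sq_le_exp_artanh[of s] s by (simp add: u_fun_def s_def[symmetric] artanh_s)
  \<comment> \<open>A crude first bound, using only \<open>s > 1/2\<close>, gives \<open>(1 - s) (1 + \<theta>) \<le> 4\<close>.\<close>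
  have "1 + \<theta> \<le> 2 * s * (1 + \<theta>)"
    using mult_right_mono[of 1 "2 * s" "1 + \<theta>"] s \<open>0 < \<theta>\<close> by simp
  then have "exp (-2 * (s * (1 + \<theta>))) \<le> exp (- (1 + \<theta>))" by simp
  moreover have "1 - s \<le> u_fun \<theta>"
    using s mult_left_mono[of 1 "1 + s" "1 - s"]
    by (simp add: u_fun_def s_def[symmetric] power2_eq_square algebra_simps)
  ultimately have "1 - s \<le> 4 * exp (- (1 + \<theta>))" using u_le by linarith
  then have "(1 - s) * (1 + \<theta>) \<le> 4 * ((1 + \<theta>) * exp (- (1 + \<theta>)))"
    using \<open>0 < \<theta>\<close> mult_right_mono[of "1 - s" "4 * exp (- (1 + \<theta>))" "1 + \<theta>"] by simp
  also have "(1 + \<theta>) * exp (- (1 + \<theta>)) \<le> 1"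
  proof -
    have "(1 + \<theta>) / exp (1 + \<theta>) \<le> 1" using exp_ge_add_one_self[of "1 + \<theta>"] by simp
    then show ?thesis by (simp only: exp_minus divide_inverse)
  qed
  finally have "(1 - s) * (1 + \<theta>) \<le> 4" by simp
  then have "\<theta> - 3 \<le> s * (1 + \<theta>)" by (simp add: algebra_simps)
  then have "exp (-2 * (s * (1 + \<theta>))) \<le> exp (6 - 2 * \<theta>)" by simp
  with u_le have "u_fun \<theta> \<le> 4 * exp (6 - 2 * \<theta>)" by linarith
  also have "exp (6 - 2 * \<theta>) = exp 6 * exp (-2 * \<theta>)"
    by (simp add: exp_diff exp_minus divide_inverse)
  finally show ?thesis by simp
qed

lemma u_fun_bigo: "u_fun \<in> O[at_top](\<lambda>\<theta>. exp (-2 * \<theta>))"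
proof (rule bigoI)
  show "eventually (\<lambda>\<theta>. norm (u_fun \<theta>) \<le> 4 * exp 6 * norm (exp (-2 * \<theta>))) at_top"
    using eventually_gt_at_top[of theta0]
    by eventually_elim (use u_fun_le u_fun_bounds in \<open>auto simp: abs_of_pos\<close>)
qed

lemma tendsto_u_fun: "(u_fun \<longlongrightarrow> 0) at_top"
  by (rule tendsto_zero_if_bigo_smallo_one[OF u_fun_bigo]) real_asymp

lemma tendsto_linear_mult_u_fun: "((\<lambda>\<theta>. (1 + \<theta>) * u_fun \<theta>) \<longlongrightarrow> 0) at_top"
  by (rule tendsto_zero_if_bigo_smallo_one[OF landau_o.big.mult_left[OF u_fun_bigo]]) real_asymp

lemma tendsto_q_fun: "(q_fun \<longlongrightarrow> 1) at_top"
  unfolding q_fun_def[abs_def]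
  using tendsto_diff[OF tendsto_const tendsto_linear_mult_u_fun] by simp

lemma tendsto_w_fun_div: "((\<lambda>\<theta>. w_fun \<theta> / (1 + \<theta>)) \<longlongrightarrow> 2) at_top"
proof -
  have "((\<lambda>\<theta>. 2 - (1 + (1 + \<theta>) * u_fun \<theta>) * (1 / (1 + \<theta>))) \<longlongrightarrow> 2 - (1 + 0) * 0) at_top"
    by (intro tendsto_intros tendsto_linear_mult_u_fun) real_asymp
  moreover have "eventually (\<lambda>\<theta>.
      2 - (1 + (1 + \<theta>) * u_fun \<theta>) * (1 / (1 + \<theta>)) = w_fun \<theta> / (1 + \<theta>)) at_top"
    using eventually_gt_at_top[of 0] by eventually_elim (simp add: w_fun_def field_simps)
  ultimately show ?thesis by (simp add: tendsto_cong)
qed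

lemma f_fun_third_deriv_bigo: "(\<lambda>\<theta>. (deriv ^^ 3) f_fun \<theta>) \<in> O[at_top](u_fun)"
proof -
  define v where "v \<theta> = (1 + \<theta>) * u_fun \<theta>" for \<theta> :: real
  define r where "r \<theta> = w_fun \<theta> / (1 + \<theta>)" for \<theta> :: real
  have v: "(v \<longlongrightarrow> 0) at_top" and r: "(r \<longlongrightarrow> 2) at_top"
    using tendsto_linear_mult_u_fun tendsto_w_fun_div
    by (simp_all add: v_def[abs_def] r_def[abs_def])
  show ?thesis
  proof (rule bigo_of_eventually_mult_tendsto)
    show "eventually (\<lambda>\<theta>. (deriv ^^ 3) f_fun \<theta>
        = u_fun \<theta> * (2 * (2 * (1 - u_fun \<theta>) * q_fun \<theta> + v \<theta> * r \<theta>) / q_fun \<theta> ^ 3)) at_top"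
      using eventually_gt_at_top[of theta0]
      by eventually_elim (use theta0_pos in \<open>simp add: f_fun_third_deriv v_def r_def\<close>)
    show "((\<lambda>\<theta>. 2 * (2 * (1 - u_fun \<theta>) * q_fun \<theta> + v \<theta> * r \<theta>) / q_fun \<theta> ^ 3) \<longlongrightarrow> 4) at_top"
      by (rule tendsto_eq_intros v r tendsto_u_fun tendsto_q_fun refl | simp)+
  qed
qed

lemma j_fun_second_deriv_bigo: "(\<lambda>\<theta>. (deriv ^^ 2) j_fun \<theta>) \<in> O[at_top](\<lambda>\<theta>. (1 + \<theta>) * u_fun \<theta>)"
proof -
  define v where "v \<theta> = (1 + \<theta>) * u_fun \<theta>" for \<theta> :: real
  define r where "r \<theta> = w_fun \<theta> / (1 + \<theta>)" for \<theta> :: real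
  define i where "i \<theta> = 1 / (1 + \<theta>)" for \<theta> :: real
  have v: "(v \<longlongrightarrow> 0) at_top" and r: "(r \<longlongrightarrow> 2) at_top" and i: "(i \<longlongrightarrow> 0) at_top"
    using tendsto_linear_mult_u_fun tendsto_w_fun_div
    by (simp_all add: v_def[abs_def] r_def[abs_def] i_def[abs_def]) real_asymp
  show ?thesis
  proof (rule bigo_of_eventually_mult_tendsto)
    show "eventually (\<lambda>\<theta>. (deriv ^^ 2) j_fun \<theta> = (1 + \<theta>) * u_fun \<theta> *
        ((2 * (1 - u_fun \<theta>) * r \<theta> * q_fun \<theta> - (2 - u_fun \<theta>) * q_fun \<theta> ^ 2 * i \<theta>
          - 2 * (1 - u_fun \<theta>) * u_fun \<theta> * q_fun \<theta> + 2 * v \<theta> * r \<theta> ^ 2)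
         / (2 * q_fun \<theta> ^ 4))) at_top"
      using eventually_gt_at_top[of theta0]
    proof eventually_elim
      case (elim \<theta>)
      then have "1 + \<theta> \<noteq> 0" using theta0_pos by auto
      then have "w_fun \<theta> = (1 + \<theta>) * r \<theta>" "(1 + \<theta>) * i \<theta> = 1" "v \<theta> = (1 + \<theta>) * u_fun \<theta>"
        by (simp_all add: r_def i_def v_def)
      then show ?case unfolding j_fun_second_deriv[OF elim] divide_inverse by algebra
    qed
    show "((\<lambda>\<theta>. (2 * (1 - u_fun \<theta>) * r \<theta> * q_fun \<theta> - (2 - u_fun \<theta>) * q_fun \<theta> ^ 2 * i \<theta>
          - 2 * (1 - u_fun \<theta>) * u_fun \<theta> * q_fun \<theta> + 2 * v \<theta> * r \<theta> ^ 2)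
         / (2 * q_fun \<theta> ^ 4)) \<longlongrightarrow> 2) at_top"
      by (rule tendsto_eq_intros v r i tendsto_u_fun tendsto_q_fun refl | simp)+
  qed
qed

theorem proposition6:
  fixes a :: real
  assumes "0 < a" and "a < 2"
  shows "(\<lambda>\<theta>. (deriv ^^ 3) f_fun \<theta>) \<in> O[at_top](\<lambda>\<theta>. exp (- a * \<theta>))
     \<and> (\<lambda>\<theta>. (deriv ^^ 2) j_fun \<theta>) \<in> O[at_top](\<lambda>\<theta>. exp (- a * \<theta>))"
proof
  have "(\<lambda>\<theta>. exp (-2 * \<theta>)) \<in> O[at_top](\<lambda>\<theta>. exp (- a * \<theta>))"
    using assms by real_asymp
  with f_fun_third_deriv_bigo u_fun_bigo
  show "(\<lambda>\<theta>. (deriv ^^ 3) f_fun \<theta>) \<in> O[at_top](\<lambda>\<theta>. exp (- a * \<theta>))"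
    by (blast intro: landau_o.big_trans)
  have "(\<lambda>\<theta>. (1 + \<theta>) * exp (-2 * \<theta>)) \<in> O[at_top](\<lambda>\<theta>. exp (- a * \<theta>))"
    using assms by real_asymp
  with j_fun_second_deriv_bigo landau_o.big.mult_left[OF u_fun_bigo]
  show "(\<lambda>\<theta>. (deriv ^^ 2) j_fun \<theta>) \<in> O[at_top](\<lambda>\<theta>. exp (- a * \<theta>))"
    by (blast intro: landau_o.big_trans)
qed

end
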